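(* Assume the focusing case $0<\mu_1\le\dots\le\mu_n$ (with $n\ge3$). Then there are infinitely many possible bifurcation parameters: for all but finitely many $k\in\mathbb N$, the equation $f(\beta)=\lambda_k$ has a unique solution $\beta\in(-\infty,\bar\beta)$.
   Context: Let $\Omega\subset\mathbb R^N$ ($N\le3$) be a smooth bounded domain whose principal Dirichlet eigenvalue of $-\Delta$ is less than $1$, and $\omega\in H_0^1(\Omega)$ the unique positive solution of $-\Delta\omega-\omega=-\omega^3$. Let $-1=\lambda_1<\lambda_2<\cdots\to\infty$ be the distinct eigenvalues of $-\Delta\psi-\psi=\lambda\omega^2\psi$, $\psi\in H_0^1(\Omega)$. Let $g(\beta)=1+\beta\sum_{j=1}^n\frac1{\mu_j-\beta}$, $f(\beta)=-1-\frac2{g(\beta)}$, and $\bar\beta$ the unique zero of $g$ in $(-\infty,0)$. A possible bifurcation parameter is a $\beta\in(-\infty,\bar\beta)$ with $f(\beta)=\lambda_k$ for some $k$ (equivalently, for which the linearization of the system $-\Delta u_j-u_j=\mu_ju_j^3+\beta\sum_{k\ne j}u_k^2u_j$ at the synchronized solution has nontrivial kernel). *)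

theory Defs
  imports Complex_Main
begin

text \<open>Coupling coefficients mu_1,...,mu_n are given as a function mu :: nat => real,
 only the values at indices 1..n matter.\<close>

definition g_fun :: "(nat \<Rightarrow> real) \<Rightarrow> nat \<Rightarrow> real \<Rightarrow> real" where
  "g_fun \<mu> n \<beta> = 1 + \<beta> * (\<Sum>j=1..n. 1 / (\<mu> j - \<beta>))"

definition f_fun :: "(nat \<Rightarrow> real) \<Rightarrow> nat \<Rightarrow> real \<Rightarrow> real" where
  "f_fun \<mu> n \<beta> = -1 - 2 / g_fun \<mu> n \<beta>"

definition beta_bar :: "(nat \<Rightarrow> real) \<Rightarrow> nat \<Rightarrow> real" where
  "beta_bar \<mu> n = (THE \<beta>. \<beta> < 0 \<and> g_fun \<mu> n \<beta> = 0)"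

end

theory Submission
  imports Defs
begin

text \<open>On the half-line \<open>\<beta> \<le> 0\<close> the function \<open>g\<close> is a continuous, strictly increasing
  sum of the terms \<open>\<beta> / (\<mu>\<^sub>j - \<beta>) = \<mu>\<^sub>j / (\<mu>\<^sub>j - \<beta>) - 1\<close>; it equals \<open>1\<close> at \<open>0\<close> and drops
  below \<open>2 - n\<close> for very negative \<open>\<beta>\<close>. Hence \<open>g\<close> maps \<open>(-\<infinity>, \<beta>\<^sub>b\<^sub>a\<^sub>r)\<close> bijectively onto
  an interval containing \<open>[2 - n, 0)\<close>, which contains \<open>[-1, 0)\<close> when \<open>n \<ge> 3\<close>. Since
  \<open>f = c\<close> means \<open>g = -2 / (c + 1)\<close>, every value \<open>c > 1\<close> is taken by \<open>f\<close> exactly once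
  below \<open>\<beta>\<^sub>b\<^sub>a\<^sub>r\<close>, and \<open>\<lambda>\<^sub>k > 1\<close> for all but finitely many \<open>k\<close> because \<open>\<lambda>\<^sub>k \<rightarrow> \<infinity>\<close>.\<close>

lemma pole_term_strict_mono:
  fixes m b1 b2 :: real
  assumes "0 < m" "b1 < b2" "b2 < m"
  shows "b1 * (1 / (m - b1)) < b2 * (1 / (m - b2))"
proof -
  have "b1 * (m - b2) < b2 * (m - b1)"
    using assms by (simp add: algebra_simps)
  then show ?thesis
    using assms by (simp add: field_simps)
qed

lemma strict_mono_on_g_fun:
  assumes pos: "\<And>j. j \<in> {1..n} \<Longrightarrow> 0 < \<mu> j" and "n \<ge> 1"
  shows "strict_mono_on {..0} (g_fun \<mu> n)"
proof (rule strict_mono_onI)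
  fix b1 b2 :: real
  assume "b1 \<in> {..0}" "b2 \<in> {..0}" "b1 < b2"
  then have "(\<Sum>j=1..n. b1 * (1 / (\<mu> j - b1))) < (\<Sum>j=1..n. b2 * (1 / (\<mu> j - b2)))"
    using \<open>n \<ge> 1\<close> pos by (intro sum_strict_mono pole_term_strict_mono) fastforce+
  then show "g_fun \<mu> n b1 < g_fun \<mu> n b2"
    unfolding g_fun_def by (simp add: sum_distrib_left)
qed

lemma continuous_on_g_fun:
  assumes pos: "\<And>j. j \<in> {1..n} \<Longrightarrow> 0 < \<mu> j"
  shows "continuous_on {..0} (g_fun \<mu> n)"
  unfolding g_fun_def[abs_def]
proof (intro continuous_intros ballI)
  fix x j assume "x \<in> {..(0::real)}" "j \<in> {1..n}"
  then show "\<mu> j - x \<noteq> 0"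
    using pos[of j] by auto
qed

lemma g_fun_less_2_minus_n:
  assumes pos: "\<And>j. j \<in> {1..n} \<Longrightarrow> 0 < \<mu> j"
    and bounded: "\<And>j. j \<in> {1..n} \<Longrightarrow> \<mu> j \<le> M"
    and "n \<ge> 1" and b: "b \<le> - (real n * M)"
  shows "g_fun \<mu> n b < 2 - real n"
proof -
  have term_less: "b * (1 / (\<mu> j - b)) < 1 / real n - 1" if j: "j \<in> {1..n}" for j
  proof -
    have "0 < \<mu> j" "\<mu> j \<le> M"
      using pos bounded j by auto
    then have "\<mu> j * real n < \<mu> j - b"
      using b mult_right_mono[OF \<open>\<mu> j \<le> M\<close>, of "real n"] by (simp add: algebra_simps)
    moreover have "0 < \<mu> j * real n"
      using \<open>0 < \<mu> j\<close> \<open>n \<ge> 1\<close> by simp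
    ultimately have "0 < \<mu> j - b"
      by linarith
    then have "\<mu> j / (\<mu> j - b) < 1 / real n"
      using \<open>\<mu> j * real n < \<mu> j - b\<close> \<open>n \<ge> 1\<close> by (simp add: field_simps)
    moreover have "b * (1 / (\<mu> j - b)) = \<mu> j / (\<mu> j - b) - 1"
      using \<open>0 < \<mu> j - b\<close> by (simp add: field_simps)
    ultimately show ?thesis
      by simp
  qed
  have "(\<Sum>j=1..n. b * (1 / (\<mu> j - b))) < (\<Sum>j=1..n. 1 / real n - 1)"
    using \<open>n \<ge> 1\<close> term_less by (intro sum_strict_mono) auto
  also have "\<dots> = 1 - real n"
    using \<open>n \<ge> 1\<close> by (simp add: field_simps)
  finally show ?thesis
    unfolding g_fun_def by (simp add: sum_distrib_left)
qed

lemma g_fun_attains: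
  assumes pos: "\<And>j. j \<in> {1..n} \<Longrightarrow> 0 < \<mu> j"
    and "n \<ge> 1" and "2 - real n \<le> t" "t \<le> 1"
  shows "\<exists>\<beta>\<le>0. g_fun \<mu> n \<beta> = t"
proof -
  define b where "b = - (real n * (\<Sum>j=1..n. \<mu> j))"
  have "\<mu> j \<le> (\<Sum>j=1..n. \<mu> j)" if "j \<in> {1..n}" for j
    using that pos by (intro member_le_sum) (auto intro: less_imp_le)
  then have "g_fun \<mu> n b < 2 - real n"
    using pos \<open>n \<ge> 1\<close> by (intro g_fun_less_2_minus_n) (auto simp: b_def)
  moreover have "g_fun \<mu> n 0 = 1"
    by (simp add: g_fun_def)
  moreover have "0 \<le> (\<Sum>j=1..n. \<mu> j)"
    using pos by (intro sum_nonneg) (auto intro: less_imp_le)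
  then have "b \<le> 0"
    by (simp add: b_def)
  moreover have "continuous_on {b..0} (g_fun \<mu> n)"
    using continuous_on_subset[OF continuous_on_g_fun[OF pos]] by auto
  ultimately show ?thesis
    using IVT'[of "g_fun \<mu> n" b t 0] assms(3,4) by force
qed

lemma beta_bar_root:
  assumes pos: "\<And>j. j \<in> {1..n} \<Longrightarrow> 0 < \<mu> j" and "n \<ge> 2"
  shows "beta_bar \<mu> n < 0" "g_fun \<mu> n (beta_bar \<mu> n) = 0"
proof -
  obtain \<beta> where "\<beta> \<le> 0" and root: "g_fun \<mu> n \<beta> = 0"
    using g_fun_attains[where \<mu>=\<mu> and n=n and t=0] pos \<open>n \<ge> 2\<close> by auto
  moreover have "\<beta> \<noteq> 0"
    using root by (auto simp: g_fun_def)
  ultimately have "\<beta> < 0"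
    by simp
  have "\<gamma> = \<beta>" if "\<gamma> < 0 \<and> g_fun \<mu> n \<gamma> = 0" for \<gamma>
  proof -
    have "strict_mono_on {..0} (g_fun \<mu> n)"
      using pos \<open>n \<ge> 2\<close> by (intro strict_mono_on_g_fun) auto
    then show ?thesis
      using that root \<open>\<beta> < 0\<close> by (auto intro: strict_mono_on_eqD)
  qed
  then have "beta_bar \<mu> n = \<beta>"
    unfolding beta_bar_def using \<open>\<beta> < 0\<close> root by blast
  then show "beta_bar \<mu> n < 0" "g_fun \<mu> n (beta_bar \<mu> n) = 0"
    using \<open>\<beta> < 0\<close> root by simp_all
qed

lemma f_fun_eq_iff:
  assumes "c \<noteq> -1"
  shows "f_fun \<mu> n \<beta> = c \<longleftrightarrow> g_fun \<mu> n \<beta> = - 2 / (c + 1)"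
proof -
  have "c + 1 \<noteq> 0"
    using assms by simp
  then show ?thesis
    unfolding f_fun_def by (cases "g_fun \<mu> n \<beta> = 0") (auto simp: field_simps)
qed

lemma ex1_f_fun_eq_below_beta_bar:
  assumes pos: "\<And>j. j \<in> {1..n} \<Longrightarrow> 0 < \<mu> j" and "n \<ge> 3" and "c > 1"
  shows "\<exists>!\<beta>. \<beta> < beta_bar \<mu> n \<and> f_fun \<mu> n \<beta> = c"
proof -
  define t where "t = - 2 / (c + 1)"
  have "-1 < t" "t < 0"
    using \<open>c > 1\<close> by (auto simp: t_def field_simps)
  have mono: "strict_mono_on {..0} (g_fun \<mu> n)"
    using pos \<open>n \<ge> 3\<close> by (intro strict_mono_on_g_fun) auto
  have bar: "beta_bar \<mu> n < 0" "g_fun \<mu> n (beta_bar \<mu> n) = 0"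
    using pos \<open>n \<ge> 3\<close> by (intro beta_bar_root; auto)+
  have f_eq: "f_fun \<mu> n \<beta> = c \<longleftrightarrow> g_fun \<mu> n \<beta> = t" for \<beta>
    using f_fun_eq_iff[of c] \<open>c > 1\<close> by (simp add: t_def)
  obtain \<beta> where "\<beta> \<le> 0" "g_fun \<mu> n \<beta> = t"
    using g_fun_attains[where \<mu>=\<mu> and n=n and t=t] pos \<open>n \<ge> 3\<close> \<open>-1 < t\<close> \<open>t < 0\<close> by auto
  moreover have "\<beta> < beta_bar \<mu> n"
    using strict_mono_on_less[OF mono, of \<beta> "beta_bar \<mu> n"] bar \<open>\<beta> \<le> 0\<close> \<open>g_fun \<mu> n \<beta> = t\<close> \<open>t < 0\<close>
    by simp
  moreover have "\<gamma> = \<beta>" if "\<gamma> < beta_bar \<mu> n" "g_fun \<mu> n \<gamma> = t" for \<gamma>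
    using strict_mono_on_eqD[OF mono, of \<gamma> \<beta>] that bar \<open>\<beta> \<le> 0\<close> \<open>g_fun \<mu> n \<beta> = t\<close> by simp
  ultimately show ?thesis
    unfolding f_eq by blast
qed

theorem lemma3p3:
  fixes \<mu> :: "nat \<Rightarrow> real" and n :: nat and lam :: "nat \<Rightarrow> real"
  assumes n3: "n \<ge> 3"
    and mu_pos: "0 < \<mu> 1"
    and mu_sorted: "\<And>i j. 1 \<le> i \<Longrightarrow> i \<le> j \<Longrightarrow> j \<le> n \<Longrightarrow> \<mu> i \<le> \<mu> j"
    and lam1: "lam 1 = -1"
    and lam_incr: "\<And>k. 1 \<le> k \<Longrightarrow> lam k < lam (Suc k)"
    and lam_inf: "filterlim lam at_top sequentially"
  shows "finite {k. \<not> (\<exists>!\<beta>. \<beta> < beta_bar \<mu> n \<and> f_fun \<mu> n \<beta> = lam k)}"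
proof -
  have pos: "0 < \<mu> j" if "j \<in> {1..n}" for j
    using mu_pos mu_sorted[of 1 j] that by force
  obtain N where N: "\<And>k. k \<ge> N \<Longrightarrow> lam k > 1"
    using lam_inf unfolding filterlim_at_top_dense eventually_sequentially by blast
  have unique: "\<exists>!\<beta>. \<beta> < beta_bar \<mu> n \<and> f_fun \<mu> n \<beta> = lam k" if "k \<ge> N" for k
    using pos n3 N[OF that] by (intro ex1_f_fun_eq_below_beta_bar) auto
  have "{k. \<not> (\<exists>!\<beta>. \<beta> < beta_bar \<mu> n \<and> f_fun \<mu> n \<beta> = lam k)} \<subseteq> {..<N}"
  proof
    fix k assume "k \<in> {k. \<not> (\<exists>!\<beta>. \<beta> < beta_bar \<mu> n \<and> f_fun \<mu> n \<beta> = lam k)}"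
    then have "\<not> N \<le> k"
      using unique by blast
    then show "k \<in> {..<N}"
      by simp
  qed
  then show ?thesis
    by (rule finite_subset) simp
qed

end
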